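(* Consider a time window $W$ between two consecutive rebuilds of an ordered linear probing hash table. If an insertion $u$ in $W$ hashes to position $i$, then it takes time $O(o_i+s_i+d_u+1)$. If a query or deletion $u$ in $W$ hashes to position $i$, then it takes time $O(o_i+s_i+1)$.
   Context: Ordered linear probing with tombstones: slots $1,\dots,n$, each holding a key, tombstone, or free; a tombstone's hash is that of the deleted key; entries in each maximal run of non-free slots are stored in hash order. A query for $u$ scans $h(u),h(u)+1,\dots$ until finding $u$, an entry with hash greater than $h(u)$, or a free slot; a deletion performs the query and replaces $u$ by a tombstone; an insertion places $u$ at its hash-order position and shifts subsequent entries right by one until reaching a tombstone or free slot, which it uses. Time = number of slots examined/moved. The peak $p_u$ of an insertion is the hash of the tombstone it uses, or the position of the free slot it uses; its displacement is $d_u=p_u-h(u)$. The positional offset $o_i$ is $j-i$ where $j\ge i$ is the largest position such that at the end of $W$ all positions in $[i,j-1]$ contain keys/tombstones with hashes smaller than $i$. The spillover $s_i$ is the largest $k\ge0$ such that, among all keys that are present at the start of $W$ or inserted during $W$, at least $4k$ have hashes in $[i,i+k)$. *)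

theory Defs
  imports Main
begin

text \<open>A tombstone remembers the deleted key, so its hash is the hash of that key.\<close>

datatype 'k slot = Free | Key 'k | Tomb 'k

datatype 'k op = Ins 'k | Del 'k | Qry 'k

type_synonym 'k table = "nat \<Rightarrow> 'k slot"

fun slot_hash :: "('k \<Rightarrow> nat) \<Rightarrow> 'k slot \<Rightarrow> nat" where
  "slot_hash h Free = 0"
| "slot_hash h (Key k) = h k"
| "slot_hash h (Tomb k) = h k"

fun is_tomb :: "'k slot \<Rightarrow> bool" where
  "is_tomb (Tomb _) = True"
| "is_tomb _ = False"

fun op_key :: "'k op \<Rightarrow> 'k" where
  "op_key (Ins u) = u"
| "op_key (Del u) = u"
| "op_key (Qry u) = u"

definition valid_table :: "('k \<Rightarrow> nat) \<Rightarrow> 'k table \<Rightarrow> bool" where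
  "valid_table h T \<longleftrightarrow>
     finite {p. T p \<noteq> Free} \<and>
     (\<forall>p. T p \<noteq> Free \<longrightarrow> slot_hash h (T p) \<le> p \<and>
                         (\<forall>q\<in>{slot_hash h (T p)..p}. T q \<noteq> Free)) \<and>
     (\<forall>p. T p \<noteq> Free \<longrightarrow> T (Suc p) \<noteq> Free \<longrightarrow>
                         slot_hash h (T p) \<le> slot_hash h (T (Suc p))) \<and>
     (\<forall>p q k. T p = Key k \<longrightarrow> T q = Key k \<longrightarrow> p = q)"

definition no_tombstones :: "'k table \<Rightarrow> bool" where
  "no_tombstones T \<longleftrightarrow> (\<forall>p. \<not> is_tomb (T p))"

definition query_stop :: "('k \<Rightarrow> nat) \<Rightarrow> 'k table \<Rightarrow> 'k \<Rightarrow> nat" where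
  "query_stop h T u = (LEAST p. h u \<le> p \<and>
      (T p = Key u \<or> T p = Free \<or> slot_hash h (T p) > h u))"

definition query_time :: "('k \<Rightarrow> nat) \<Rightarrow> 'k table \<Rightarrow> 'k \<Rightarrow> nat" where
  "query_time h T u = query_stop h T u - h u + 1"

text \<open>Insertion: u is placed at its hash-order position (the first slot at or after h(u)
that is free or holds an entry of hash \<open>\<ge> h(u)\<close>), and the subsequent entries are shifted
right by one until the first tombstone or free slot, which is used.\<close>
definition ins_pos :: "('k \<Rightarrow> nat) \<Rightarrow> 'k table \<Rightarrow> 'k \<Rightarrow> nat" where
  "ins_pos h T u = (LEAST p. h u \<le> p \<and> (T p = Free \<or> h u \<le> slot_hash h (T p)))"

definition ins_end :: "('k \<Rightarrow> nat) \<Rightarrow> 'k table \<Rightarrow> 'k \<Rightarrow> nat" where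
  "ins_end h T u = (LEAST r. ins_pos h T u \<le> r \<and> (T r = Free \<or> is_tomb (T r)))"

definition insert_time :: "('k \<Rightarrow> nat) \<Rightarrow> 'k table \<Rightarrow> 'k \<Rightarrow> nat" where
  "insert_time h T u = ins_end h T u - h u + 1"

definition ins_peak :: "('k \<Rightarrow> nat) \<Rightarrow> 'k table \<Rightarrow> 'k \<Rightarrow> nat" where
  "ins_peak h T u = (case T (ins_end h T u) of Tomb k \<Rightarrow> h k | _ \<Rightarrow> ins_end h T u)"

definition displacement :: "('k \<Rightarrow> nat) \<Rightarrow> 'k table \<Rightarrow> 'k \<Rightarrow> nat" where
  "displacement h T u = ins_peak h T u - h u"

definition do_insert :: "('k \<Rightarrow> nat) \<Rightarrow> 'k table \<Rightarrow> 'k \<Rightarrow> 'k table" where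
  "do_insert h T u = (\<lambda>p. if p < ins_pos h T u \<or> ins_end h T u < p then T p
                          else if p = ins_pos h T u then Key u else T (p - 1))"

definition do_delete :: "('k \<Rightarrow> nat) \<Rightarrow> 'k table \<Rightarrow> 'k \<Rightarrow> 'k table" where
  "do_delete h T u = (if T (query_stop h T u) = Key u
                      then T(query_stop h T u := Tomb u) else T)"

fun step :: "('k \<Rightarrow> nat) \<Rightarrow> 'k table \<Rightarrow> 'k op \<Rightarrow> 'k table" where
  "step h T (Ins u) = do_insert h T u"
| "step h T (Del u) = do_delete h T u"
| "step h T (Qry u) = T"

fun op_time :: "('k \<Rightarrow> nat) \<Rightarrow> 'k table \<Rightarrow> 'k op \<Rightarrow> nat" where
  "op_time h T (Ins u) = insert_time h T u"
| "op_time h T (Del u) = query_time h T u"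
| "op_time h T (Qry u) = query_time h T u"

definition state :: "('k \<Rightarrow> nat) \<Rightarrow> 'k table \<Rightarrow> 'k op list \<Rightarrow> nat \<Rightarrow> 'k table" where
  "state h T0 ops t = foldl (step h) T0 (take t ops)"

text \<open>A window between two consecutive rebuilds: it starts from a valid table produced
by a rebuild (hence without tombstones); each insertion inserts a key not currently
present in the table.\<close>
definition legal_window :: "('k \<Rightarrow> nat) \<Rightarrow> 'k table \<Rightarrow> 'k op list \<Rightarrow> bool" where
  "legal_window h T0 ops \<longleftrightarrow> valid_table h T0 \<and> no_tombstones T0 \<and>
     (\<forall>t < length ops. \<forall>u. ops ! t = Ins u \<longrightarrow> (\<forall>p. state h T0 ops t p \<noteq> Key u))"

definition window_keys :: "'k table \<Rightarrow> 'k op list \<Rightarrow> 'k set" where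
  "window_keys T0 ops = {k. \<exists>p. T0 p = Key k} \<union> {u. Ins u \<in> set ops}"

definition pos_offset :: "('k \<Rightarrow> nat) \<Rightarrow> 'k table \<Rightarrow> nat \<Rightarrow> nat" where
  "pos_offset h Tend i = (GREATEST j. i \<le> j \<and>
      (\<forall>p\<in>{i..<j}. Tend p \<noteq> Free \<and> slot_hash h (Tend p) < i)) - i"

definition spillover :: "('k \<Rightarrow> nat) \<Rightarrow> 'k set \<Rightarrow> nat \<Rightarrow> nat" where
  "spillover h K i = (GREATEST k. 4 * k \<le> card {x\<in>K. i \<le> h x \<and> h x < i + k})"

end

theory Submission
  imports Defs
begin

text \<open>A query or insertion for \<open>u\<close> with \<open>h u = i\<close> scans from \<open>i\<close> in two phases.  Up to
  \<open>ins_pos\<close> it passes slots filled with entries hashing before \<open>i\<close>; insertions and deletions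
  never break such a run, so it is still there at the end of the window and this phase costs
  at most \<open>o_i\<close>.  Beyond \<open>ins_pos\<close> every scanned entry hashes into \<open>[i, i + d_u]\<close> (into
  \<open>{i}\<close> for a query).  Each entry hashing to \<open>j\<close>, key or tombstone, can be charged to a distinct
  key of the window hashing to \<open>j\<close>, because an insertion hashing to \<open>j\<close> reuses a tombstone of
  hash \<open>j\<close> whenever one exists.  So the second phase costs at most the number of window keys
  hashing into \<open>[i, i + d_u]\<close>, which by maximality of \<open>s_i\<close> is at most \<open>4 (s_i + d_u + 2)\<close>.\<close>

lemma valid_table_finite: "valid_table h T \<Longrightarrow> finite {p. T p \<noteq> Free}"
  by (simp add: valid_table_def)

lemma valid_table_hash_le: "valid_table h T \<Longrightarrow> T p \<noteq> Free \<Longrightarrow> slot_hash h (T p) \<le> p"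
  by (simp add: valid_table_def)

lemma valid_table_occupied_between:
  "valid_table h T \<Longrightarrow> T p \<noteq> Free \<Longrightarrow> slot_hash h (T p) \<le> q \<Longrightarrow> q \<le> p \<Longrightarrow> T q \<noteq> Free"
  unfolding valid_table_def by auto

lemma valid_table_sorted:
  "valid_table h T \<Longrightarrow> T p \<noteq> Free \<Longrightarrow> T (Suc p) \<noteq> Free \<Longrightarrow>
   slot_hash h (T p) \<le> slot_hash h (T (Suc p))"
  unfolding valid_table_def by auto

lemma valid_table_key_unique: "valid_table h T \<Longrightarrow> T p = Key k \<Longrightarrow> T q = Key k \<Longrightarrow> p = q"
  unfolding valid_table_def by auto

lemma valid_table_ex_free: "valid_table h T \<Longrightarrow> \<exists>p\<ge>a. T p = Free"
  using valid_table_finite infinite_Ici[of a] by (metis (mono_tags, lifting) atLeast_iff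
      mem_Collect_eq rev_finite_subset subsetI)

text \<open>Across a free slot hashes increase too, since the run of an entry starts after the last
  free slot before it: the entries of a valid table are sorted by hash globally.\<close>
lemma valid_table_hash_mono:
  assumes V: "valid_table h T" and pq: "p \<le> q" and occ: "T p \<noteq> Free" "T q \<noteq> Free"
  shows "slot_hash h (T p) \<le> slot_hash h (T q)"
  using pq occ(2)
proof (induction q rule: dec_induct)
  case base
  show ?case by simp
next
  case (step q)
  show ?case
  proof (cases "T q = Free")
    case True
    have "slot_hash h (T p) \<le> q" using valid_table_hash_le[OF V occ(1)] step.hyps(1) by simp
    also have "q < slot_hash h (T (Suc q))"
      using valid_table_occupied_between[OF V step.prems, of q] True by fastforce
    finally show ?thesis by simp
  next
    case False
    then show ?thesis using step.IH valid_table_sorted[OF V False step.prems] by simp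
  qed
qed

lemma scan_stop:
  assumes V: "valid_table h T" and free_stops: "\<And>p. T p = Free \<Longrightarrow> P p"
  shows "a \<le> (LEAST p. a \<le> p \<and> P p)" and "P (LEAST p. a \<le> p \<and> P p)"
    and "a \<le> q \<Longrightarrow> q < (LEAST p. a \<le> p \<and> P p) \<Longrightarrow> \<not> P q"
proof -
  obtain f where "a \<le> f" "T f = Free" using valid_table_ex_free[OF V] by blast
  then have "a \<le> f \<and> P f" using free_stops by blast
  then show "a \<le> (LEAST p. a \<le> p \<and> P p)" "P (LEAST p. a \<le> p \<and> P p)"
    by (metis (mono_tags, lifting) LeastI)+
  show "a \<le> q \<Longrightarrow> q < (LEAST p. a \<le> p \<and> P p) \<Longrightarrow> \<not> P q"
    using not_less_Least by blast
qed

lemma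
  assumes V: "valid_table h T"
  shows ins_pos_ge_hash: "h u \<le> ins_pos h T u"
    and ins_pos_stop: "T (ins_pos h T u) = Free \<or> h u \<le> slot_hash h (T (ins_pos h T u))"
    and below_ins_pos: "h u \<le> p \<Longrightarrow> p < ins_pos h T u \<Longrightarrow>
                         T p \<noteq> Free \<and> slot_hash h (T p) < h u"
  using scan_stop[OF V, of "\<lambda>p. T p = Free \<or> h u \<le> slot_hash h (T p)" "h u"]
  unfolding ins_pos_def by (auto simp: not_le)

lemma
  assumes V: "valid_table h T"
  shows ins_pos_le_ins_end: "ins_pos h T u \<le> ins_end h T u"
    and ins_end_stop: "T (ins_end h T u) = Free \<or> is_tomb (T (ins_end h T u))"
    and before_ins_end: "ins_pos h T u \<le> p \<Longrightarrow> p < ins_end h T u \<Longrightarrow>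
                          T p \<noteq> Free \<and> \<not> is_tomb (T p)"
  using scan_stop[OF V, of "\<lambda>p. T p = Free \<or> is_tomb (T p)" "ins_pos h T u"]
  unfolding ins_end_def by auto

lemma
  assumes V: "valid_table h T"
  shows before_query_stop: "h u \<le> p \<Longrightarrow> p < query_stop h T u \<Longrightarrow>
                             T p \<noteq> Free \<and> slot_hash h (T p) \<le> h u"
  using scan_stop[OF V, of "\<lambda>p. T p = Key u \<or> T p = Free \<or> h u < slot_hash h (T p)" "h u"]
  unfolding query_stop_def by (auto simp: not_less)

lemma hash_lt_before_ins_pos:
  assumes V: "valid_table h T" and "q < ins_pos h T u" "T q \<noteq> Free"
  shows "slot_hash h (T q) < h u"
proof (cases "h u \<le> q")
  case True
  then show ?thesis using below_ins_pos[OF V] assms(2) by blast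
next
  case False
  then show ?thesis using valid_table_hash_le[OF V assms(3)] by simp
qed

lemma hash_ge_from_ins_pos:
  assumes V: "valid_table h T" and q: "ins_pos h T u \<le> q" "T q \<noteq> Free"
  shows "h u \<le> slot_hash h (T q)"
proof (cases "T (ins_pos h T u) = Free")
  case True
  have "ins_pos h T u < slot_hash h (T q)"
    using valid_table_occupied_between[OF V q(2), of "ins_pos h T u"] q(1) True by fastforce
  then show ?thesis using ins_pos_ge_hash[OF V, of u] by simp
next
  case False
  then have "h u \<le> slot_hash h (T (ins_pos h T u))" using ins_pos_stop[OF V, of u] by simp
  also have "\<dots> \<le> slot_hash h (T q)" using valid_table_hash_mono[OF V q(1) False q(2)] .
  finally show ?thesis .
qed

definition hash_slots :: "('k \<Rightarrow> nat) \<Rightarrow> 'k table \<Rightarrow> nat \<Rightarrow> nat set" where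
  "hash_slots h T j = {q. T q \<noteq> Free \<and> slot_hash h (T q) = j}"

lemma finite_hash_slots: "valid_table h T \<Longrightarrow> finite (hash_slots h T j)"
  using valid_table_finite by (auto simp: hash_slots_def intro: finite_subset[of _ "{p. T p \<noteq> Free}"])

fun entry_key :: "'k slot \<Rightarrow> 'k" where
  "entry_key (Key k) = k"

lemma card_hash_slots_le_keys:
  assumes V: "valid_table h T" and fK: "finite K"
    and keys: "\<And>q. q \<in> hash_slots h T j \<Longrightarrow> \<exists>k\<in>K. T q = Key k"
  shows "card (hash_slots h T j) \<le> card {k\<in>K. h k = j}"
proof (rule card_inj_on_le)
  show "inj_on (\<lambda>q. entry_key (T q)) (hash_slots h T j)"
    by (rule inj_onI) (metis keys entry_key.simps valid_table_key_unique[OF V])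
  show "(\<lambda>q. entry_key (T q)) ` hash_slots h T j \<subseteq> {k\<in>K. h k = j}"
    using keys by (force simp: hash_slots_def)
qed (simp add: fK)

definition offset_run :: "('k \<Rightarrow> nat) \<Rightarrow> 'k table \<Rightarrow> nat \<Rightarrow> nat \<Rightarrow> bool" where
  "offset_run h T i j \<longleftrightarrow> (\<forall>p\<in>{i..<j}. T p \<noteq> Free \<and> slot_hash h (T p) < i)"

lemma offset_run_le_pos_offset:
  assumes V: "valid_table h T" and run: "offset_run h T i j" and ij: "i \<le> j"
  shows "j \<le> i + pos_offset h T i"
proof -
  obtain f where f: "i \<le> f" "T f = Free" using valid_table_ex_free[OF V] by blast
  let ?Q = "\<lambda>j. i \<le> j \<and> offset_run h T i j"
  have "y \<le> f" if "?Q y" for y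
    using that f by (metis offset_run_def atLeastLessThan_iff not_le)
  then have "j \<le> Greatest ?Q" using run ij by (intro Greatest_le_nat) auto
  then show ?thesis unfolding pos_offset_def offset_run_def by simp
qed

lemma offset_run_ins_pos: "valid_table h T \<Longrightarrow> offset_run h T (h u) (ins_pos h T u)"
  unfolding offset_run_def using below_ins_pos[of h T u] by simp

definition ins_origin :: "('k \<Rightarrow> nat) \<Rightarrow> 'k table \<Rightarrow> 'k \<Rightarrow> nat \<Rightarrow> nat" where
  "ins_origin h T u p = (if p < ins_pos h T u \<or> ins_end h T u < p then p else p - 1)"

lemma do_insert_ins_origin:
  "p \<noteq> ins_pos h T u \<Longrightarrow> do_insert h T u p = T (ins_origin h T u p)"
  by (simp add: do_insert_def ins_origin_def)

lemma ins_origin_le: "ins_origin h T u p \<le> p"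
  by (simp add: ins_origin_def)

context
  fixes h :: "'k \<Rightarrow> nat" and T :: "'k table" and u :: 'k
  assumes V: "valid_table h T"
begin

lemma do_insert_ins_pos: "do_insert h T u (ins_pos h T u) = Key u"
  using ins_pos_le_ins_end[OF V, of u] by (simp add: do_insert_def)

lemma ins_origin_mono: "p \<le> q \<Longrightarrow> ins_origin h T u p \<le> ins_origin h T u q"
  using ins_pos_le_ins_end[OF V, of u] by (auto simp: ins_origin_def)

lemma ins_origin_less_ins_pos_iff:
  "p \<noteq> ins_pos h T u \<Longrightarrow> ins_origin h T u p < ins_pos h T u \<longleftrightarrow> p < ins_pos h T u"
  using ins_pos_le_ins_end[OF V, of u] by (auto simp: ins_origin_def)

lemma inj_on_ins_origin: "inj_on (ins_origin h T u) (- {ins_pos h T u})"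
  using ins_pos_le_ins_end[OF V, of u] by (auto simp: inj_on_def ins_origin_def)

lemma ins_origin_ne_ins_end: "p \<noteq> ins_pos h T u \<Longrightarrow> ins_origin h T u p \<noteq> ins_end h T u"
  using ins_pos_le_ins_end[OF V, of u] by (auto simp: ins_origin_def)

lemma do_insert_occupied:
  assumes "T q \<noteq> Free \<or> ins_pos h T u \<le> q \<and> q \<le> ins_end h T u"
  shows "do_insert h T u q \<noteq> Free"
proof -
  consider "q < ins_pos h T u \<or> ins_end h T u < q" | "q = ins_pos h T u"
    | "ins_pos h T u \<le> q - 1" "q - 1 < ins_end h T u" "q \<noteq> ins_pos h T u"
    by linarith
  then show ?thesis
  proof cases
    case 1
    then show ?thesis using assms by (auto simp: do_insert_def)
  next
    case 3
    then show ?thesis using before_ins_end[OF V, of u "q - 1"] by (auto simp: do_insert_def)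
  qed (simp add: do_insert_ins_pos)
qed

lemma finite_do_insert: "finite {p. do_insert h T u p \<noteq> Free}"
proof (rule finite_subset)
  show "{p. do_insert h T u p \<noteq> Free} \<subseteq> {p. T p \<noteq> Free} \<union> {ins_pos h T u..ins_end h T u}"
    by (auto simp: do_insert_def)
qed (simp add: valid_table_finite[OF V])

lemma do_insert_run:
  assumes occ: "do_insert h T u p \<noteq> Free"
  shows "slot_hash h (do_insert h T u p) \<le> p \<and>
         (\<forall>q\<in>{slot_hash h (do_insert h T u p)..p}. do_insert h T u q \<noteq> Free)"
proof (cases "p = ins_pos h T u")
  case True
  have "do_insert h T u q \<noteq> Free" if "h u \<le> q" "q \<le> p" for q
    using do_insert_occupied below_ins_pos[OF V, of u q] ins_pos_le_ins_end[OF V, of u] that True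
    by (cases "q = p") auto
  then show ?thesis using True ins_pos_ge_hash[OF V, of u] by (simp add: do_insert_ins_pos)
next
  case False
  define src where "src = ins_origin h T u p"
  have e: "do_insert h T u p = T src" using do_insert_ins_origin[OF False] src_def by simp
  have occ_src: "T src \<noteq> Free" using occ e by simp
  have "do_insert h T u q \<noteq> Free" if "slot_hash h (T src) \<le> q" "q \<le> p" for q
  proof (cases "q \<le> src")
    case True
    then show ?thesis
      using do_insert_occupied valid_table_occupied_between[OF V occ_src] that(1) by blast
  next
    case False
    then have "q = p" using that(2) by (auto simp: src_def ins_origin_def split: if_splits)
    then show ?thesis using occ by simp
  qed
  then show ?thesis
    using e valid_table_hash_le[OF V occ_src] ins_origin_le[of h T u p] src_def by auto
qed

lemma do_insert_hash_mono:
  assumes pq: "p \<le> q" and occ: "do_insert h T u p \<noteq> Free" "do_insert h T u q \<noteq> Free"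
  shows "slot_hash h (do_insert h T u p) \<le> slot_hash h (do_insert h T u q)"
proof -
  let ?ip = "ins_pos h T u" and ?o = "ins_origin h T u"
  consider "p = ?ip" "q = ?ip" | "p = ?ip" "q \<noteq> ?ip" | "p \<noteq> ?ip" "q = ?ip" | "p \<noteq> ?ip" "q \<noteq> ?ip"
    by blast
  then show ?thesis
  proof cases
    case 2
    then have "?ip \<le> ?o q" using pq ins_origin_less_ins_pos_iff[of q] by simp
    then show ?thesis using 2 occ(2) hash_ge_from_ins_pos[OF V]
      by (simp add: do_insert_ins_pos do_insert_ins_origin)
  next
    case 3
    then have "?o p < ?ip" using pq ins_origin_less_ins_pos_iff[of p] by simp
    then show ?thesis using 3 occ(1) hash_lt_before_ins_pos[OF V]
      by (simp add: do_insert_ins_pos do_insert_ins_origin less_imp_le)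
  next
    case 4
    then show ?thesis
      using occ valid_table_hash_mono[OF V ins_origin_mono[OF pq]] by (simp add: do_insert_ins_origin)
  qed simp
qed

lemma do_insert_key_unique:
  assumes absent: "\<forall>p. T p \<noteq> Key u"
    and keys: "do_insert h T u p = Key k" "do_insert h T u q = Key k"
  shows "p = q"
proof (cases "k = u")
  case True
  have at_ins_pos: "r = ins_pos h T u" if "do_insert h T u r = Key u" for r
    using that absent do_insert_ins_origin by metis
  then show ?thesis using keys True by metis
next
  case False
  then have "p \<noteq> ins_pos h T u" "q \<noteq> ins_pos h T u"
    using keys by (auto simp: do_insert_ins_pos)
  moreover from this have "ins_origin h T u p = ins_origin h T u q"
    using keys valid_table_key_unique[OF V] by (simp add: do_insert_ins_origin)
  ultimately show ?thesis using inj_on_ins_origin by (auto dest: inj_onD)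
qed

lemma valid_table_do_insert:
  assumes "\<forall>p. T p \<noteq> Key u"
  shows "valid_table h (do_insert h T u)"
proof -
  have "\<forall>p. do_insert h T u p \<noteq> Free \<longrightarrow> slot_hash h (do_insert h T u p) \<le> p \<and>
      (\<forall>q\<in>{slot_hash h (do_insert h T u p)..p}. do_insert h T u q \<noteq> Free)"
    using do_insert_run by blast
  moreover have "\<forall>p. do_insert h T u p \<noteq> Free \<longrightarrow> do_insert h T u (Suc p) \<noteq> Free \<longrightarrow>
      slot_hash h (do_insert h T u p) \<le> slot_hash h (do_insert h T u (Suc p))"
    by (auto intro: do_insert_hash_mono)
  moreover have "\<forall>p q k. do_insert h T u p = Key k \<longrightarrow> do_insert h T u q = Key k \<longrightarrow> p = q"
    using do_insert_key_unique[OF assms] by blast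
  ultimately show ?thesis unfolding valid_table_def using finite_do_insert by (intro conjI)
qed


lemma ins_end_reuses_tomb:
  assumes tomb: "T q = Tomb k" "h k = h u"
  shows "is_tomb (T (ins_end h T u)) \<and> slot_hash h (T (ins_end h T u)) = h u"
proof -
  let ?ip = "ins_pos h T u" and ?ie = "ins_end h T u"
  have occ: "T q \<noteq> Free" and hq: "slot_hash h (T q) = h u" using tomb by simp_all
  have "?ip \<le> q" using hash_lt_before_ins_pos[OF V _ occ, where u=u] hq by (metis leI less_irrefl)
  then have "?ie \<le> q" using before_ins_end[OF V, of u q] tomb(1) by (cases "?ie \<le> q") auto
  have "h u \<le> ?ie" using ins_pos_ge_hash[OF V, of u] ins_pos_le_ins_end[OF V, of u] by simp
  then have occ_ie: "T ?ie \<noteq> Free" using valid_table_occupied_between[OF V occ] hq \<open>?ie \<le> q\<close> by simp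
  then have "is_tomb (T ?ie)" using ins_end_stop[OF V, of u] by simp
  moreover have "h u \<le> slot_hash h (T ?ie)"
    using hash_ge_from_ins_pos[OF V ins_pos_le_ins_end[OF V] occ_ie] .
  moreover have "slot_hash h (T ?ie) \<le> h u"
    using valid_table_hash_mono[OF V \<open>?ie \<le> q\<close> occ_ie occ] hq by simp
  ultimately show ?thesis by simp
qed

lemma card_hash_slots_do_insert_shifted:
  "card (hash_slots h (do_insert h T u) j - {ins_pos h T u}) \<le> card (hash_slots h T j)"
proof (rule card_inj_on_le[OF inj_on_subset[OF inj_on_ins_origin]])
  show "ins_origin h T u ` (hash_slots h (do_insert h T u) j - {ins_pos h T u}) \<subseteq> hash_slots h T j"
    by (auto simp: hash_slots_def do_insert_ins_origin)
qed (auto simp: finite_hash_slots[OF V])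

lemma card_hash_slots_do_insert_reuse:
  assumes reuse: "is_tomb (T (ins_end h T u))" "slot_hash h (T (ins_end h T u)) = h u"
  shows "card (hash_slots h (do_insert h T u) j) \<le> card (hash_slots h T j)"
proof (rule card_inj_on_le[OF inj_on_subset[OF _ subset_UNIV] _ finite_hash_slots[OF V]])
  let ?ip = "ins_pos h T u" and ?ie = "ins_end h T u"
  let ?g = "\<lambda>p. if p = ?ip then ?ie else ins_origin h T u p"
  show "inj ?g"
  proof (rule injI)
    fix x y assume "?g x = ?g y"
    then show "x = y"
      using ins_origin_ne_ins_end ins_origin_ne_ins_end[THEN not_sym] inj_onD[OF inj_on_ins_origin]
      by (cases "x = ?ip"; cases "y = ?ip") auto
  qed
  show "?g ` hash_slots h (do_insert h T u) j \<subseteq> hash_slots h T j"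
    using reuse by (auto simp: hash_slots_def do_insert_ins_origin do_insert_ins_pos)
qed

lemma card_hash_slots_do_insert:
  assumes absent: "\<forall>p. T p \<noteq> Key u" and keys: "\<forall>p k. T p = Key k \<longrightarrow> k \<in> K"
    and fK: "finite K" and count: "card (hash_slots h T j) \<le> card {k\<in>K. h k = j}"
  shows "card (hash_slots h (do_insert h T u) j) \<le> card {k\<in>insert u K. h k = j}"
proof -
  let ?ip = "ins_pos h T u" and ?ie = "ins_end h T u" and ?S' = "hash_slots h (do_insert h T u) j"
  have grow: "card {k\<in>K. h k = j} \<le> card {k\<in>insert u K. h k = j}"
    using fK by (intro card_mono) auto
  consider (other) "h u \<noteq> j"
    | (reuse) "h u = j" "is_tomb (T ?ie)" "slot_hash h (T ?ie) = h u"
    | (fresh) "h u = j" "\<not> (is_tomb (T ?ie) \<and> slot_hash h (T ?ie) = h u)"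
    by blast
  then show ?thesis
  proof cases
    case other
    then have "?S' - {?ip} = ?S'" by (simp add: hash_slots_def do_insert_ins_pos)
    then have "card ?S' \<le> card (hash_slots h T j)"
      using card_hash_slots_do_insert_shifted[of j] by simp
    with count grow show ?thesis by linarith
  next
    case reuse
    then show ?thesis using card_hash_slots_do_insert_reuse[OF reuse(2,3), of j] count grow by linarith
  next
    case fresh
    have "\<exists>k\<in>K - {u}. T q = Key k" if "q \<in> hash_slots h T j" for q
    proof (cases "T q")
      case (Tomb k)
      then show ?thesis using that fresh ins_end_reuses_tomb by (auto simp: hash_slots_def)
    qed (use that keys absent in \<open>auto simp: hash_slots_def\<close>)
    then have "card (hash_slots h T j) \<le> card {k\<in>K - {u}. h k = j}"
      by (rule card_hash_slots_le_keys[OF V finite_Diff[OF fK]])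
    moreover have "{k\<in>insert u K. h k = j} = insert u {k\<in>K - {u}. h k = j}" using fresh by auto
    moreover have "card ?S' \<le> Suc (card (?S' - {?ip}))"
      by (simp add: card_Diff_singleton_if) arith
    ultimately show ?thesis using card_hash_slots_do_insert_shifted[of j] fK by simp
  qed
qed

lemma offset_run_do_insert:
  assumes run: "offset_run h T i j"
  shows "offset_run h (do_insert h T u) i j"
  unfolding offset_run_def
proof
  fix p assume p: "p \<in> {i..<j}"
  then have occ: "T p \<noteq> Free" "slot_hash h (T p) < i" using run by (auto simp: offset_run_def)
  show "do_insert h T u p \<noteq> Free \<and> slot_hash h (do_insert h T u p) < i"
  proof (cases "p = ins_pos h T u")
    case True
    then show ?thesis using occ ins_pos_stop[OF V, of u] by (simp add: do_insert_ins_pos)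
  next
    case False
    let ?src = "ins_origin h T u p"
    have e: "do_insert h T u p = T ?src" by (rule do_insert_ins_origin[OF False])
    have occ_src: "T ?src \<noteq> Free" using do_insert_occupied occ(1) e by metis
    have "slot_hash h (T ?src) < i"
    proof (cases "?src < i")
      case True
      then show ?thesis using valid_table_hash_le[OF V occ_src] by simp
    next
      case False
      then show ?thesis using run p ins_origin_le[of h T u p] by (auto simp: offset_run_def)
    qed
    then show ?thesis using e occ_src by simp
  qed
qed

end

lemma do_delete_occupied_iff: "do_delete h T u p \<noteq> Free \<longleftrightarrow> T p \<noteq> Free"
  by (auto simp: do_delete_def)

lemma slot_hash_do_delete: "slot_hash h (do_delete h T u p) = slot_hash h (T p)"
  by (auto simp: do_delete_def)

lemma do_delete_KeyD: "do_delete h T u p = Key k \<Longrightarrow> T p = Key k"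
  by (auto simp: do_delete_def split: if_splits)

lemma valid_table_do_delete: "valid_table h T \<Longrightarrow> valid_table h (do_delete h T u)"
  unfolding valid_table_def do_delete_occupied_iff slot_hash_do_delete
  by (blast dest: do_delete_KeyD)

lemma offset_run_do_delete: "offset_run h T i j \<Longrightarrow> offset_run h (do_delete h T u) i j"
  by (simp add: offset_run_def do_delete_occupied_iff slot_hash_do_delete)

lemma hash_slots_do_delete: "hash_slots h (do_delete h T u) j = hash_slots h T j"
  by (simp add: hash_slots_def do_delete_occupied_iff slot_hash_do_delete)

lemma card_occupied_hash_range:
  assumes V: "valid_table h T" and fW: "finite W"
    and count: "\<And>j. card (hash_slots h T j) \<le> card {k\<in>W. h k = j}"
  shows "card {q. T q \<noteq> Free \<and> a \<le> slot_hash h (T q) \<and> slot_hash h (T q) \<le> b}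
         \<le> card {k\<in>W. a \<le> h k \<and> h k \<le> b}"
proof -
  have "{q. T q \<noteq> Free \<and> a \<le> slot_hash h (T q) \<and> slot_hash h (T q) \<le> b} = (\<Union>j\<in>{a..b}. hash_slots h T j)"
    by (auto simp: hash_slots_def)
  also have "card \<dots> = (\<Sum>j\<in>{a..b}. card (hash_slots h T j))"
    by (rule card_UN_disjoint) (auto simp: finite_hash_slots[OF V], auto simp: hash_slots_def)
  also have "\<dots> \<le> (\<Sum>j\<in>{a..b}. card {k\<in>W. h k = j})" by (rule sum_mono) (rule count)
  also have "\<dots> = card (\<Union>j\<in>{a..b}. {k\<in>W. h k = j})"
    by (rule card_UN_disjoint[symmetric]) (auto simp: fW)
  also have "(\<Union>j\<in>{a..b}. {k\<in>W. h k = j}) = {k\<in>W. a \<le> h k \<and> h k \<le> b}" by auto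
  finally show ?thesis .
qed

definition hash_count :: "('k \<Rightarrow> nat) \<Rightarrow> 'k set \<Rightarrow> nat \<Rightarrow> nat \<Rightarrow> nat" where
  "hash_count h W i k = card {x\<in>W. i \<le> h x \<and> h x < i + k}"

lemma hash_count_le_spillover:
  assumes fW: "finite W"
  shows "hash_count h W i L \<le> 4 * (spillover h W i + L + 1)"
proof (cases "hash_count h W i L \<le> 4 * L")
  case False
  let ?s = "spillover h W i" and ?Q = "\<lambda>k. 4 * k \<le> hash_count h W i k"
  have bounded: "k \<le> card W" if "?Q k" for k
    using that card_mono[OF fW, of "{x\<in>W. i \<le> h x \<and> h x < i + k}"] by (auto simp: hash_count_def)
  have spillover_eq: "?s = Greatest ?Q" by (simp add: spillover_def hash_count_def)
  have "L \<le> ?s" unfolding spillover_eq using False bounded by (intro Greatest_le_nat) auto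
  have "\<not> ?Q (Suc ?s)"
    using Greatest_le_nat[of ?Q "Suc ?s" "card W"] bounded spillover_eq by auto
  moreover have "hash_count h W i L \<le> hash_count h W i (Suc ?s)"
    unfolding hash_count_def using fW \<open>L \<le> ?s\<close> by (intro card_mono) auto
  ultimately show ?thesis by simp
qed simp

lemma query_time_le:
  assumes V: "valid_table h T" and fW: "finite W"
    and count: "\<And>j. card (hash_slots h T j) \<le> card {k\<in>W. h k = j}"
  shows "query_time h T u \<le> (ins_pos h T u - h u) + hash_count h W (h u) 1 + 1"
proof -
  let ?ip = "ins_pos h T u" and ?qs = "query_stop h T u"
  let ?S = "{q. T q \<noteq> Free \<and> h u \<le> slot_hash h (T q) \<and> slot_hash h (T q) \<le> h u}"
  have sub: "{?ip..<?qs} \<subseteq> ?S"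
  proof
    fix q assume q: "q \<in> {?ip..<?qs}"
    then have "h u \<le> q" using ins_pos_ge_hash[OF V, of u] by simp
    then have "T q \<noteq> Free \<and> slot_hash h (T q) \<le> h u" using before_query_stop[OF V] q by simp
    then show "q \<in> ?S" using hash_ge_from_ins_pos[OF V] q by simp
  qed
  have "finite ?S" using valid_table_finite[OF V] by (rule finite_subset[rotated]) auto
  then have "?qs - ?ip \<le> card ?S" using card_mono[OF _ sub] by simp
  also have "\<dots> \<le> card {k\<in>W. h u \<le> h k \<and> h k \<le> h u}" by (rule card_occupied_hash_range[OF V fW count])
  also have "\<dots> = hash_count h W (h u) 1" unfolding hash_count_def by (rule arg_cong[where f=card]) auto
  finally show ?thesis
    using ins_pos_ge_hash[OF V, of u] unfolding query_time_def by linarith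
qed

lemma hash_le_ins_peak:
  assumes V: "valid_table h T" and p: "ins_pos h T u \<le> p" "p < ins_end h T u"
  shows "slot_hash h (T p) \<le> ins_peak h T u"
proof (cases "T (ins_end h T u)")
  case Free
  have "slot_hash h (T p) \<le> p" using valid_table_hash_le[OF V] before_ins_end[OF V p] by simp
  then show ?thesis using Free p(2) by (simp add: ins_peak_def)
next
  case (Tomb k)
  then show ?thesis
    using valid_table_hash_mono[OF V _ _, of p "ins_end h T u"] before_ins_end[OF V p] p(2)
    by (simp add: ins_peak_def)
next
  case (Key k)
  then show ?thesis using ins_end_stop[OF V, of u] by simp
qed

lemma insert_time_le:
  assumes V: "valid_table h T" and fW: "finite W"
    and count: "\<And>j. card (hash_slots h T j) \<le> card {k\<in>W. h k = j}"
  shows "insert_time h T u \<le> (ins_pos h T u - h u) + hash_count h W (h u) (displacement h T u + 1) + 1"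
proof -
  let ?ip = "ins_pos h T u" and ?ie = "ins_end h T u" and ?pk = "ins_peak h T u"
  let ?S = "{q. T q \<noteq> Free \<and> h u \<le> slot_hash h (T q) \<and> slot_hash h (T q) \<le> ?pk}"
  have sub: "{?ip..<?ie} \<subseteq> ?S"
  proof
    fix q assume q: "q \<in> {?ip..<?ie}"
    then have "T q \<noteq> Free" using before_ins_end[OF V, of u q] by simp
    then show "q \<in> ?S" using hash_ge_from_ins_pos[OF V] hash_le_ins_peak[OF V] q by simp
  qed
  have "finite ?S" using valid_table_finite[OF V] by (rule finite_subset[rotated]) auto
  then have "?ie - ?ip \<le> card ?S" using card_mono[OF _ sub] by simp
  also have "\<dots> \<le> card {k\<in>W. h u \<le> h k \<and> h k \<le> ?pk}" by (rule card_occupied_hash_range[OF V fW count])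
  also have "\<dots> \<le> hash_count h W (h u) (displacement h T u + 1)"
    unfolding hash_count_def displacement_def using fW by (intro card_mono) auto
  finally show ?thesis
    using ins_pos_ge_hash[OF V, of u] ins_pos_le_ins_end[OF V, of u] unfolding insert_time_def
    by linarith
qed

lemma state_Suc: "t < length ops \<Longrightarrow> state h T0 ops (Suc t) = step h (state h T0 ops t) (ops ! t)"
  by (simp add: state_def take_Suc_conv_app_nth)

definition keys_until :: "'k table \<Rightarrow> 'k op list \<Rightarrow> nat \<Rightarrow> 'k set" where
  "keys_until T0 ops t = {k. \<exists>p. T0 p = Key k} \<union> {u. Ins u \<in> set (take t ops)}"

lemma keys_until_Suc:
  "t < length ops \<Longrightarrow> keys_until T0 ops (Suc t) =
     (case ops ! t of Ins u \<Rightarrow> insert u (keys_until T0 ops t) | _ \<Rightarrow> keys_until T0 ops t)"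
  by (cases "ops ! t") (auto simp: keys_until_def take_Suc_conv_app_nth)

lemma keys_until_subset_window_keys: "keys_until T0 ops t \<subseteq> window_keys T0 ops"
  unfolding keys_until_def window_keys_def using set_take_subset[of t ops] by blast

lemma finite_window_keys:
  assumes V: "valid_table h T0"
  shows "finite (window_keys T0 ops)"
proof -
  have "{k. \<exists>p. T0 p = Key k} \<subseteq> (\<lambda>p. entry_key (T0 p)) ` {p. T0 p \<noteq> Free}"
  proof clarify
    fix k p assume "T0 p = Key k"
    then show "k \<in> (\<lambda>p. entry_key (T0 p)) ` {p. T0 p \<noteq> Free}" by (intro image_eqI[of _ _ p]) auto
  qed
  then have "finite {k. \<exists>p. T0 p = Key k}" using valid_table_finite[OF V] finite_surj by blast
  moreover have "{u. Ins u \<in> set ops} \<subseteq> op_key ` set ops" by force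
  then have "finite {u. Ins u \<in> set ops}" using finite_surj by blast
  ultimately show ?thesis by (simp add: window_keys_def)
qed

definition window_inv :: "('k \<Rightarrow> nat) \<Rightarrow> 'k table \<Rightarrow> 'k set \<Rightarrow> bool" where
  "window_inv h T K \<longleftrightarrow> valid_table h T \<and> finite K \<and> (\<forall>p k. T p = Key k \<longrightarrow> k \<in> K) \<and>
     (\<forall>j. card (hash_slots h T j) \<le> card {k\<in>K. h k = j})"

lemma window_inv_init:
  assumes V: "valid_table h T0" and "no_tombstones T0" and fK: "finite K"
    and keys: "\<forall>p k. T0 p = Key k \<longrightarrow> k \<in> K"
  shows "window_inv h T0 K"
proof -
  have "\<exists>k\<in>K. T0 q = Key k" if "q \<in> hash_slots h T0 j" for q j
    using that keys \<open>no_tombstones T0\<close>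
    by (cases "T0 q") (auto simp: hash_slots_def no_tombstones_def dest: spec[of _ q])
  then show ?thesis
    unfolding window_inv_def using V fK keys card_hash_slots_le_keys[OF V fK] by blast
qed

lemma window_inv_do_insert:
  assumes inv: "window_inv h T K" and absent: "\<forall>p. T p \<noteq> Key u"
  shows "window_inv h (do_insert h T u) (insert u K)"
proof -
  have V: "valid_table h T" and fK: "finite K" and keys: "\<forall>p k. T p = Key k \<longrightarrow> k \<in> K"
    and count: "\<And>j. card (hash_slots h T j) \<le> card {k\<in>K. h k = j}"
    using inv by (auto simp: window_inv_def)
  have "do_insert h T u p = Key k \<Longrightarrow> k \<in> insert u K" for p k
    using keys by (auto simp: do_insert_def split: if_splits)
  then show ?thesis
    unfolding window_inv_def
    using valid_table_do_insert[OF V absent] card_hash_slots_do_insert[OF V absent keys fK count] fK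
    by auto
qed

lemma window_inv_do_delete: "window_inv h T K \<Longrightarrow> window_inv h (do_delete h T u) K"
  unfolding window_inv_def hash_slots_do_delete by (blast dest: valid_table_do_delete do_delete_KeyD)

lemma window_inv_state:
  assumes L: "legal_window h T0 ops"
  shows "t \<le> length ops \<Longrightarrow> window_inv h (state h T0 ops t) (keys_until T0 ops t)"
proof (induction t)
  case 0
  have V: "valid_table h T0" and "no_tombstones T0" using L by (auto simp: legal_window_def)
  moreover have "finite (keys_until T0 ops 0)"
    using finite_window_keys[OF V] keys_until_subset_window_keys by (rule finite_subset[rotated])
  ultimately show ?case by (intro window_inv_init) (auto simp: state_def keys_until_def)
next
  case (Suc t)
  then have t: "t < length ops" by simp
  have inv: "window_inv h (state h T0 ops t) (keys_until T0 ops t)" using Suc by simp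
  show ?case
  proof (cases "ops ! t")
    case (Ins u)
    have "\<forall>p. state h T0 ops t p \<noteq> Key u" using L t Ins by (simp add: legal_window_def)
    then show ?thesis using window_inv_do_insert[OF inv] state_Suc[OF t] keys_until_Suc[OF t] Ins by simp
  qed (use inv window_inv_do_delete state_Suc[OF t] keys_until_Suc[OF t] in simp_all)
qed

lemma valid_table_state:
  "legal_window h T0 ops \<Longrightarrow> t \<le> length ops \<Longrightarrow> valid_table h (state h T0 ops t)"
  using window_inv_state[of h T0 ops t] by (simp add: window_inv_def)

lemma card_hash_slots_state:
  assumes L: "legal_window h T0 ops" and t: "t \<le> length ops"
  shows "card (hash_slots h (state h T0 ops t) j) \<le> card {k\<in>window_keys T0 ops. h k = j}"
proof -
  have V0: "valid_table h T0" using L by (simp add: legal_window_def)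
  have "card (hash_slots h (state h T0 ops t) j) \<le> card {k\<in>keys_until T0 ops t. h k = j}"
    using window_inv_state[OF L t] by (simp add: window_inv_def)
  also have "\<dots> \<le> card {k\<in>window_keys T0 ops. h k = j}"
    using finite_window_keys[OF V0] keys_until_subset_window_keys[of T0 ops t] by (intro card_mono) auto
  finally show ?thesis .
qed

lemma offset_run_state_mono:
  assumes L: "legal_window h T0 ops" and tt': "t \<le> t'" "t' \<le> length ops"
    and run: "offset_run h (state h T0 ops t) i j"
  shows "offset_run h (state h T0 ops t') i j"
  using tt'
proof (induction t' rule: dec_induct)
  case (step n)
  then have n: "n < length ops" by simp
  have V: "valid_table h (state h T0 ops n)" using valid_table_state[OF L] n by simp
  show ?case
    using state_Suc[OF n] offset_run_do_insert[OF V] offset_run_do_delete step.IH n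
    by (cases "ops ! n") simp_all
qed (use run in simp)

lemma ins_pos_le_pos_offset:
  assumes L: "legal_window h T0 ops" and t: "t \<le> length ops"
  shows "ins_pos h (state h T0 ops t) u - h u \<le> pos_offset h (state h T0 ops (length ops)) (h u)"
proof -
  have V: "valid_table h (state h T0 ops t)" using valid_table_state[OF L t] .
  have "offset_run h (state h T0 ops (length ops)) (h u) (ins_pos h (state h T0 ops t) u)"
    using offset_run_state_mono[OF L t order_refl offset_run_ins_pos[OF V]] .
  then show ?thesis
    using offset_run_le_pos_offset[OF valid_table_state[OF L order_refl]] ins_pos_ge_hash[OF V, of u]
    by fastforce
qed

lemma query_time_window_bound:
  assumes L: "legal_window h T0 ops" and t: "t \<le> length ops"
  shows "query_time h (state h T0 ops t) u \<le>
    9 * (pos_offset h (state h T0 ops (length ops)) (h u) + spillover h (window_keys T0 ops) (h u) + 1)"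
proof -
  have fW: "finite (window_keys T0 ops)" using L finite_window_keys by (auto simp: legal_window_def)
  have "query_time h (state h T0 ops t) u \<le>
      (ins_pos h (state h T0 ops t) u - h u) + hash_count h (window_keys T0 ops) (h u) 1 + 1"
    using query_time_le[OF valid_table_state[OF L t] fW card_hash_slots_state[OF L t]] .
  then show ?thesis
    using ins_pos_le_pos_offset[OF L t, of u] hash_count_le_spillover[OF fW, of h "h u" 1] by simp
qed

lemma insert_time_window_bound:
  assumes L: "legal_window h T0 ops" and t: "t \<le> length ops"
  shows "insert_time h (state h T0 ops t) u \<le>
    9 * (pos_offset h (state h T0 ops (length ops)) (h u) + spillover h (window_keys T0 ops) (h u)
         + displacement h (state h T0 ops t) u + 1)"
proof -
  let ?d = "displacement h (state h T0 ops t) u"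
  have fW: "finite (window_keys T0 ops)" using L finite_window_keys by (auto simp: legal_window_def)
  have "insert_time h (state h T0 ops t) u \<le>
      (ins_pos h (state h T0 ops t) u - h u) + hash_count h (window_keys T0 ops) (h u) (?d + 1) + 1"
    using insert_time_le[OF valid_table_state[OF L t] fW card_hash_slots_state[OF L t]] .
  then show ?thesis
    using ins_pos_le_pos_offset[OF L t, of u] hash_count_le_spillover[OF fW, of h "h u" "?d + 1"]
    by simp
qed

theorem mainTheorem13:
  "\<exists>C::nat. \<forall>(h::'k \<Rightarrow> nat) (T0::'k table) ops t.
     legal_window h T0 ops \<and> t < length ops \<longrightarrow>
     (let T = state h T0 ops t;
          i = h (op_key (ops ! t));
          o_i = pos_offset h (state h T0 ops (length ops)) i;
          s_i = spillover h (window_keys T0 ops) i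
      in (case ops ! t of
            Ins u \<Rightarrow> op_time h T (Ins u) \<le> C * (o_i + s_i + displacement h T u + 1)
          | Del u \<Rightarrow> op_time h T (Del u) \<le> C * (o_i + s_i + 1)
          | Qry u \<Rightarrow> op_time h T (Qry u) \<le> C * (o_i + s_i + 1)))"
proof (intro exI[of _ 9] allI impI, elim conjE)
  fix h :: "'k \<Rightarrow> nat" and T0 :: "'k table" and ops t
  assume L: "legal_window h T0 ops" and "t < length ops"
  then have t: "t \<le> length ops" by simp
  show "let T = state h T0 ops t;
          i = h (op_key (ops ! t));
          o_i = pos_offset h (state h T0 ops (length ops)) i;
          s_i = spillover h (window_keys T0 ops) i
      in (case ops ! t of
            Ins u \<Rightarrow> op_time h T (Ins u) \<le> 9 * (o_i + s_i + displacement h T u + 1)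
          | Del u \<Rightarrow> op_time h T (Del u) \<le> 9 * (o_i + s_i + 1)
          | Qry u \<Rightarrow> op_time h T (Qry u) \<le> 9 * (o_i + s_i + 1))"
    using insert_time_window_bound[OF L t] query_time_window_bound[OF L t]
    by (cases "ops ! t") simp_all
qed

end
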